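(* For $\alpha>0$ let $c_2(\alpha)=2\int_0^\infty \ln(z)G_\alpha(z)g_\alpha(z)\,dz$ and $\beta_0(\alpha)=\psi^{-1}(c_2(\alpha))-\alpha$. Then $\beta_0(\alpha)\in(0,\alpha)$, and, for estimating $H_S(\underline\theta)$ under squared error loss: (a) the generalized Bayes estimators $\delta_{\psi(\alpha+\beta)}(X_1,X_2)=\ln Z_2-\psi(\alpha+\beta)$ with $0\le\beta\le\beta_0(\alpha)$ are admissible within the class $\mathcal K_1$; (b) for $\beta\in(-\alpha,0)\cup(\beta_0(\alpha),\infty)$ the estimator $\delta_{\psi(\alpha+\beta)}$ is inadmissible; specifically, for $\beta\in(-\alpha,0)$ it is dominated by $\delta_{\psi(\alpha)}(X_1,X_2)=\ln Z_2-\psi(\alpha)$, and for $\beta>\beta_0(\alpha)$ it is dominated by $\delta_{c_2(\alpha)}(X_1,X_2)=\ln Z_2-c_2(\alpha)$.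
   Context: Fix a known $\alpha>0$. $X_1,X_2$ are independent, $X_i$ having density $f(x\mid\theta_i)=\frac{x^{\alpha-1}e^{-x/\theta_i}}{\Gamma(\alpha)\theta_i^{\alpha}}$, $x>0$, with unknown $\underline\theta=(\theta_1,\theta_2)\in\Theta=(0,\infty)^2$. $Z_1=\min\{X_1,X_2\}$, $Z_2=\max\{X_1,X_2\}$. $H_S(\underline\theta)=\ln\theta_1\, I(X_1\ge X_2)+\ln\theta_2\, I(X_1<X_2)$. $\psi$ is the digamma function (strictly increasing on $(0,\infty)$, with inverse $\psi^{-1}$); $G_\alpha,g_\alpha$ are the distribution function and density of the gamma distribution with shape $\alpha$, scale $1$. For $c\in\mathbb R$, $\delta_c(X_1,X_2)=\ln Z_2-c$, and $\mathcal K_1=\{\delta_c:c\in\mathbb R\}$. Risk: $R(\underline\theta,\delta)=\mathbb E_{\underline\theta}(\delta(X_1,X_2)-H_S(\underline\theta))^2$. $\delta'$ dominates $\delta$ if its risk is $\le$ for all $\underline\theta$ and $<$ for some; $\delta$ is inadmissible if dominated by some estimator; $\delta\in\mathcal K_1$ is admissible within $\mathcal K_1$ if no member of $\mathcal K_1$ dominates it. *)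

theory Defs
  imports "HOL-Analysis.Analysis"
begin

definition gamma_dens :: "real \<Rightarrow> real \<Rightarrow> real \<Rightarrow> real" where
  "gamma_dens \<alpha> \<theta> x =
     (if x > 0 then x powr (\<alpha> - 1) * exp (- x / \<theta>) / (Gamma \<alpha> * \<theta> powr \<alpha>) else 0)"

definition g_std :: "real \<Rightarrow> real \<Rightarrow> real" where
  "g_std \<alpha> z = gamma_dens \<alpha> 1 z"

definition G_std :: "real \<Rightarrow> real \<Rightarrow> real" where
  "G_std \<alpha> z = (LINT t:{..z}|lborel. g_std \<alpha> t)"

definition H_S :: "real \<Rightarrow> real \<Rightarrow> real \<Rightarrow> real \<Rightarrow> real" where
  "H_S \<theta>1 \<theta>2 x1 x2 = (if x1 \<ge> x2 then ln \<theta>1 else ln \<theta>2)"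

definition delta :: "real \<Rightarrow> real \<Rightarrow> real \<Rightarrow> real" where
  "delta c x1 x2 = ln (max x1 x2) - c"

definition risk :: "real \<Rightarrow> real \<Rightarrow> real \<Rightarrow> (real \<Rightarrow> real \<Rightarrow> real) \<Rightarrow> ennreal" where
  "risk \<alpha> \<theta>1 \<theta>2 d =
     (\<integral>\<^sup>+ p. ennreal ((d (fst p) (snd p) - H_S \<theta>1 \<theta>2 (fst p) (snd p))\<^sup>2
                 * gamma_dens \<alpha> \<theta>1 (fst p) * gamma_dens \<alpha> \<theta>2 (snd p))
       \<partial>(lborel \<Otimes>\<^sub>M lborel))"

definition dominates :: "real \<Rightarrow> (real \<Rightarrow> real \<Rightarrow> real) \<Rightarrow> (real \<Rightarrow> real \<Rightarrow> real) \<Rightarrow> bool" where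
  "dominates \<alpha> d' d \<longleftrightarrow>
     (\<forall>\<theta>1>0. \<forall>\<theta>2>0. risk \<alpha> \<theta>1 \<theta>2 d' \<le> risk \<alpha> \<theta>1 \<theta>2 d) \<and>
     (\<exists>\<theta>1>0. \<exists>\<theta>2>0. risk \<alpha> \<theta>1 \<theta>2 d' < risk \<alpha> \<theta>1 \<theta>2 d)"

definition inadmissible :: "real \<Rightarrow> (real \<Rightarrow> real \<Rightarrow> real) \<Rightarrow> bool" where
  "inadmissible \<alpha> d \<longleftrightarrow>
     (\<exists>d'. (\<lambda>p. d' (fst p) (snd p)) \<in> borel_measurable (lborel \<Otimes>\<^sub>M lborel) \<and> dominates \<alpha> d' d)"

definition admissible_K1 :: "real \<Rightarrow> (real \<Rightarrow> real \<Rightarrow> real) \<Rightarrow> bool" where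
  "admissible_K1 \<alpha> d \<longleftrightarrow> \<not> (\<exists>c. dominates \<alpha> (delta c) d)"

definition c2 :: "real \<Rightarrow> real" where
  "c2 \<alpha> = 2 * (LINT z:{0<..}|lborel. ln z * G_std \<alpha> z * g_std \<alpha> z)"

definition Digamma_inv :: "real \<Rightarrow> real" where
  "Digamma_inv y = (THE x. x > 0 \<and> Digamma x = y)"

definition beta0 :: "real \<Rightarrow> real" where
  "beta0 \<alpha> = Digamma_inv (c2 \<alpha>) - \<alpha>"

end

theory Submission
  imports Defs "HOL-Probability.Probability"
begin

text \<open>
  Write \<open>X\<^sub>i = \<theta>\<^sub>i V\<^sub>i\<close> with \<open>V\<^sub>1, V\<^sub>2\<close> independent standard gamma variables of shape
  \<open>\<alpha>\<close>. Then \<open>ln Z\<^sub>2 - H\<^sub>S(\<theta>) = ln V\<^sub>J\<close>, where \<open>J\<close> is the index attaining \<open>Z\<^sub>2\<close>, so the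
  risk of \<open>\<delta>\<^sub>c\<close> is \<open>E (ln V\<^sub>J - c)\<^sup>2\<close> and two members \<open>\<delta>\<^sub>u, \<delta>\<^sub>v\<close> of \<open>K\<^sub>1\<close> compare
  according to the sign of \<open>(u - v) (u + v - 2 B(\<theta>))\<close> with \<open>B(\<theta>) = E ln V\<^sub>J\<close>.
  The mean \<open>B(\<theta>)\<close> always exceeds \<open>\<psi>(\<alpha>) = E ln V\<^sub>1\<close>, tends to \<open>\<psi>(\<alpha>)\<close> as
  \<open>\<theta>\<^sub>2/\<theta>\<^sub>1 \<rightarrow> 0\<close>, and never exceeds its value \<open>E max(ln V\<^sub>1, ln V\<^sub>2) = c\<^sub>2(\<alpha>)\<close> at
  \<open>\<theta>\<^sub>1 = \<theta>\<^sub>2\<close>. Hence raising \<open>c < \<psi>(\<alpha>)\<close> to \<open>\<psi>(\<alpha>)\<close>, or lowering \<open>c > c\<^sub>2(\<alpha>)\<close> to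
  \<open>c\<^sub>2(\<alpha>)\<close>, lowers the risk at every \<open>\<theta>\<close>, while for \<open>\<psi>(\<alpha>) \<le> c \<le> c\<^sub>2(\<alpha>)\<close> every other
  constant is worse at some \<open>\<theta>\<close>.
  Finally \<open>\<psi>(\<alpha>) < c\<^sub>2(\<alpha>) < E ln (V\<^sub>1 + V\<^sub>2) = \<psi>(2\<alpha>)\<close> because \<open>V\<^sub>1 + V\<^sub>2\<close> is gamma
  of shape \<open>2\<alpha>\<close>, and monotonicity of \<open>\<psi>\<close> turns this into \<open>0 < \<beta>\<^sub>0(\<alpha>) < \<alpha>\<close>.
\<close>

lemma ln_sq_le_powr:
  fixes z e :: real
  assumes "z > 0" "e > 0"
  shows "(e * ln z)\<^sup>2 \<le> z powr (2 * e) + z powr (- (2 * e))"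
proof -
  have ln_le: "t * ln z \<le> z powr t" for t
    using ln_le_minus_one[of "z powr t"] assms by (simp add: ln_powr)
  have sq: "(z powr t)\<^sup>2 = z powr (2 * t)" for t
    by (metis mult_2 powr_add power2_eq_square)
  show ?thesis
  proof (cases "ln z \<ge> 0")
    case True
    have "(e * ln z)\<^sup>2 \<le> (z powr e)\<^sup>2"
      using True assms ln_le[of e] by (intro power_mono) simp_all
    moreover have "z powr (- (2 * e)) \<ge> 0" by simp
    ultimately show ?thesis using sq[of e] by linarith
  next
    case False
    have "(- (e * ln z))\<^sup>2 \<le> (z powr (- e))\<^sup>2"
      using False assms ln_le[of "- e"] by (intro power_mono) (simp_all add: mult_le_0_iff)
    then have "(e * ln z)\<^sup>2 \<le> z powr (- (2 * e))" using sq[of "- e"] by simp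
    then show ?thesis using powr_ge_zero[of z "2 * e"] by linarith
  qed
qed

lemma abs_exp_minus_one_le: "\<bar>exp t - 1\<bar> \<le> \<bar>t\<bar> * (exp t + 1)" for t :: real
proof (cases "t \<ge> 0")
  case True
  have "exp t * (1 - t) \<le> exp t * exp (- t)"
    using exp_ge_add_one_self[of "- t"] by (intro mult_left_mono) auto
  then have "exp t - 1 \<le> t * exp t" by (simp add: algebra_simps exp_minus_inverse)
  then show ?thesis using True by (simp add: algebra_simps)
next
  case False
  then have "exp t < 1" by simp
  then have "\<bar>exp t - 1\<bar> \<le> \<bar>t\<bar>" using exp_ge_add_one_self[of t] False by linarith
  also have "\<dots> \<le> \<bar>t\<bar> * (exp t + 1)" by (simp add: mult_le_cancel_left1)
  finally show ?thesis .
qed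

lemma abs_powr_minus_one_le:
  fixes z h c :: real
  assumes "z > 0" "0 < h" "h \<le> c"
  shows "\<bar>z powr h - 1\<bar> \<le> h * \<bar>ln z\<bar> * (z powr c + 2)"
proof -
  have "z powr h \<le> z powr c + 1"
  proof (cases "z \<le> 1")
    case True
    then have "z powr h \<le> 1" using assms by (intro powr_le1) auto
    then show ?thesis using powr_ge_zero[of z c] by linarith
  next
    case False
    then have "z powr h \<le> z powr c" using assms by (intro powr_mono) auto
    then show ?thesis by simp
  qed
  moreover have "\<bar>z powr h - 1\<bar> \<le> h * \<bar>ln z\<bar> * (z powr h + 1)"
    using abs_exp_minus_one_le[of "h * ln z"] assms by (simp add: powr_def abs_mult mult.commute)
  ultimately show ?thesis
    using assms by (elim order.trans) (intro mult_left_mono; simp)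
qed

lemma (in prob_space) distr_pair_snd:
  assumes "sigma_finite_measure N"
  shows "distr (M \<Otimes>\<^sub>M N) N snd = N"
proof (rule measure_eqI)
  fix A assume A: "A \<in> sets (distr (M \<Otimes>\<^sub>M N) N snd)"
  then have "emeasure (distr (M \<Otimes>\<^sub>M N) N snd) A = emeasure (M \<Otimes>\<^sub>M N) (space M \<times> A)"
    by (auto simp: emeasure_distr space_pair_measure dest: sets.sets_into_space
        intro!: arg_cong2[where f = emeasure])
  with A show "emeasure (distr (M \<Otimes>\<^sub>M N) N snd) A = emeasure N A"
    by (simp add: sigma_finite_measure.emeasure_pair_measure_Times[OF assms] emeasure_space_1)
qed simp

lemma integral_pos_of_pos_on:
  fixes f :: "'a \<Rightarrow> real"
  assumes f: "integrable N f" and nonneg: "AE x in N. f x \<ge> 0"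
    and S: "S \<in> sets N" "emeasure N S > 0" and pos: "\<And>x. x \<in> S \<Longrightarrow> f x > 0"
  shows "integral\<^sup>L N f > 0"
proof -
  have "integral\<^sup>L N f \<noteq> 0"
  proof
    assume "integral\<^sup>L N f = 0"
    then have "AE x in N. f x = 0" using integral_nonneg_eq_0_iff_AE[OF f nonneg] by simp
    then have "AE x in N. x \<notin> S" by eventually_elim (use pos in force)
    moreover have "{x \<in> space N. \<not> x \<notin> S} = S" using sets.sets_into_space[OF S(1)] by auto
    ultimately have "emeasure N S = 0" using AE_iff_measurable[OF S(1)] by simp
    with S(2) show False by simp
  qed
  with integral_nonneg_AE[OF nonneg] show ?thesis by simp
qed

lemma (in prob_space) integral_sq_diff_shift:
  fixes w :: "'a \<Rightarrow> real"
  assumes "integrable M w" "integrable M (\<lambda>x. (w x)\<^sup>2)"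
  shows "(\<integral>x. (w x - u)\<^sup>2 \<partial>M) - (\<integral>x. (w x - v)\<^sup>2 \<partial>M) = (u - v) * (u + v - 2 * expectation w)"
proof -
  have "(\<lambda>x. (w x - c)\<^sup>2) = (\<lambda>x. (w x)\<^sup>2 - 2 * c * w x + c\<^sup>2)" for c
    by (simp add: power2_diff algebra_simps)
  then have "(\<integral>x. (w x - c)\<^sup>2 \<partial>M) = (\<integral>x. (w x)\<^sup>2 \<partial>M) - 2 * c * expectation w + c\<^sup>2" for c
    using assms by (simp add: prob_space)
  then show ?thesis by (simp add: power2_eq_square algebra_simps)
qed

definition gamma_kernel :: "real \<Rightarrow> real \<Rightarrow> real" where
  "gamma_kernel b z = (if z > 0 then z powr (b - 1) * exp (- z) else 0)"

lemma borel_measurable_gamma_kernel [measurable]: "gamma_kernel b \<in> borel_measurable borel"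
  unfolding gamma_kernel_def by measurable

lemma gamma_kernel_nonneg: "gamma_kernel b z \<ge> 0"
  unfolding gamma_kernel_def by auto

lemma powr_mult_gamma_kernel: "z powr e * gamma_kernel b z = gamma_kernel (b + e) z"
  unfolding gamma_kernel_def by (simp add: powr_add[symmetric] algebra_simps)

lemma has_bochner_integral_gamma_kernel:
  assumes "b > 0"
  shows "has_bochner_integral lborel (gamma_kernel b) (Gamma b)"
proof (rule has_bochner_integral_nn_integral)
  show "gamma_kernel b \<in> borel_measurable lborel" by simp
  show "AE z in lborel. 0 \<le> gamma_kernel b z" by (simp add: gamma_kernel_nonneg)
  show "0 \<le> Gamma b" using Gamma_real_pos[OF assms] by simp
  have "(\<integral>\<^sup>+z. ennreal (gamma_kernel b z) \<partial>lborel) =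
        (\<integral>\<^sup>+t. ennreal (indicator {0..} t * t powr (b - 1) / exp t) \<partial>lborel)"
    by (intro nn_integral_cong) (auto simp: gamma_kernel_def exp_minus field_simps indicator_def)
  then show "(\<integral>\<^sup>+z. ennreal (gamma_kernel b z) \<partial>lborel) = ennreal (Gamma b)"
    using Gamma_conv_nn_integral_real[OF assms] by simp
qed

lemma integrable_gamma_kernel: "b > 0 \<Longrightarrow> integrable lborel (gamma_kernel b)"
  using has_bochner_integral_gamma_kernel by (rule integrable.intros)

lemma integral_gamma_kernel: "b > 0 \<Longrightarrow> integral\<^sup>L lborel (gamma_kernel b) = Gamma b"
  using has_bochner_integral_gamma_kernel by (rule has_bochner_integral_integral_eq)

lemma integrable_ln_sq_gamma_kernel:
  assumes "b > 0"
  shows "integrable lborel (\<lambda>z. (ln z)\<^sup>2 * gamma_kernel b z)"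
proof -
  define e where "e = b / 4"
  have e: "e > 0" "b - 2 * e > 0" using assms by (auto simp: e_def)
  let ?bound = "\<lambda>z. (gamma_kernel (b + 2 * e) z + gamma_kernel (b + - (2 * e)) z) / e\<^sup>2"
  show ?thesis
  proof (rule Bochner_Integration.integrable_bound)
    show "(\<lambda>z. (ln z)\<^sup>2 * gamma_kernel b z) \<in> borel_measurable lborel" by measurable
    show "integrable lborel ?bound"
      using e assms by (intro integrable_divide_zero Bochner_Integration.integrable_add
          integrable_gamma_kernel) auto
    show "AE z in lborel. norm ((ln z)\<^sup>2 * gamma_kernel b z) \<le> norm (?bound z)"
    proof (rule AE_I2)
      fix z :: real
      have "(ln z)\<^sup>2 * gamma_kernel b z \<le> ?bound z"
      proof (cases "z > 0")
        case True
        have "e\<^sup>2 * ((ln z)\<^sup>2 * gamma_kernel b z)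
            \<le> (z powr (2 * e) + z powr (- (2 * e))) * gamma_kernel b z"
          using ln_sq_le_powr[OF True e(1)]
          by (simp only: mult.assoc[symmetric] power_mult_distrib[symmetric])
            (intro mult_right_mono gamma_kernel_nonneg)
        also have "\<dots> = gamma_kernel (b + 2 * e) z + gamma_kernel (b + - (2 * e)) z"
          by (simp only: distrib_right powr_mult_gamma_kernel)
        finally show ?thesis using e by (simp add: pos_le_divide_eq mult.commute)
      next
        case False
        then have "gamma_kernel c z = 0" for c by (simp add: gamma_kernel_def)
        then show ?thesis by simp
      qed
      then show "norm ((ln z)\<^sup>2 * gamma_kernel b z) \<le> norm (?bound z)"
        by (simp add: gamma_kernel_nonneg)
    qed
  qed
qed

lemma integrable_ln_gamma_kernel:
  assumes "b > 0"
  shows "integrable lborel (\<lambda>z. ln z * gamma_kernel b z)"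
proof (rule Bochner_Integration.integrable_bound)
  show "integrable lborel (\<lambda>z. gamma_kernel b z + (ln z)\<^sup>2 * gamma_kernel b z)"
    using assms by (intro Bochner_Integration.integrable_add integrable_gamma_kernel
        integrable_ln_sq_gamma_kernel)
  show "(\<lambda>z. ln z * gamma_kernel b z) \<in> borel_measurable lborel" by measurable
  show "AE z in lborel. norm (ln z * gamma_kernel b z)
      \<le> norm (gamma_kernel b z + (ln z)\<^sup>2 * gamma_kernel b z)"
  proof (rule AE_I2)
    fix z :: real
    have "\<bar>ln z\<bar> \<le> 1 + (ln z)\<^sup>2"
      using zero_le_power2[of "\<bar>ln z\<bar> - 1"] zero_le_power2[of "ln z"]
      by (simp add: power2_diff power2_abs)
    then have "\<bar>ln z\<bar> * gamma_kernel b z \<le> (1 + (ln z)\<^sup>2) * gamma_kernel b z"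
      by (rule mult_right_mono) (rule gamma_kernel_nonneg)
    then show "norm (ln z * gamma_kernel b z)
        \<le> norm (gamma_kernel b z + (ln z)\<^sup>2 * gamma_kernel b z)"
      by (simp add: abs_mult gamma_kernel_nonneg distrib_right)
  qed
qed

lemma gamma_kernel_difference_quotient:
  "(gamma_kernel (b + h) z - gamma_kernel b z) / h = gamma_kernel b z * ((z powr h - 1) / h)"
  by (simp flip: powr_mult_gamma_kernel add: algebra_simps diff_divide_distrib)

lemma gamma_kernel_difference_quotient_tendsto:
  assumes "filterlim h (at 0) F"
  shows "((\<lambda>n. (gamma_kernel (b + h n) z - gamma_kernel b z) / h n) \<longlongrightarrow> ln z * gamma_kernel b z) F"
proof (cases "z > 0")
  case True
  have "((\<lambda>t. exp (t * ln z)) has_real_derivative exp (0 * ln z) * ln z) (at 0)"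
    by (auto intro!: derivative_eq_intros)
  from filterlim_compose[OF DERIV_D[OF this] assms]
  have "((\<lambda>n. (z powr h n - 1) / h n) \<longlongrightarrow> ln z) F"
    using True by (simp add: powr_def)
  then have "((\<lambda>n. gamma_kernel b z * ((z powr h n - 1) / h n)) \<longlongrightarrow> gamma_kernel b z * ln z) F"
    by (rule tendsto_mult_left)
  then show ?thesis
    unfolding gamma_kernel_difference_quotient by (simp only: mult.commute)
qed (simp add: gamma_kernel_def)

lemma abs_gamma_kernel_difference_quotient_le:
  assumes "0 < h" "h \<le> c"
  shows "\<bar>(gamma_kernel (b + h) z - gamma_kernel b z) / h\<bar>
      \<le> \<bar>ln z * gamma_kernel (b + c) z\<bar> + 2 * \<bar>ln z * gamma_kernel b z\<bar>"
proof (cases "z > 0")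
  case True
  have "\<bar>(gamma_kernel (b + h) z - gamma_kernel b z) / h\<bar>
      = gamma_kernel b z * (\<bar>z powr h - 1\<bar> / h)"
    unfolding gamma_kernel_difference_quotient
    using assms by (simp add: abs_mult gamma_kernel_nonneg)
  also have "\<dots> \<le> gamma_kernel b z * (\<bar>ln z\<bar> * (z powr c + 2))"
    using abs_powr_minus_one_le[OF True assms] assms
    by (intro mult_left_mono gamma_kernel_nonneg) (simp add: divide_le_eq mult_ac)
  also have "\<dots> = \<bar>ln z * gamma_kernel (b + c) z\<bar> + 2 * \<bar>ln z * gamma_kernel b z\<bar>"
    using powr_mult_gamma_kernel[of z c b]
    by (simp add: algebra_simps abs_mult gamma_kernel_nonneg)
  finally show ?thesis .
qed (simp add: gamma_kernel_def)

lemma integral_ln_gamma_kernel: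
  assumes b: "b > 0"
  shows "(\<integral>z. ln z * gamma_kernel b z \<partial>lborel) = Gamma b * Digamma b"
proof -
  \<comment> \<open>Differentiate \<open>Gamma b = \<integral> gamma_kernel b\<close> in \<open>b\<close> under the integral sign.\<close>
  define h where "h n = b / 4 * inverse (real (Suc n))" for n
  have h_pos: "0 < h n" and h_le: "h n \<le> b / 4" for n
    using b by (auto simp: h_def field_simps)
  have "h \<longlonglongrightarrow> 0"
    unfolding h_def by (intro tendsto_mult_right_zero LIMSEQ_inverse_real_of_nat)
  moreover have "\<forall>n. h n \<noteq> 0" using h_pos by (metis less_irrefl)
  ultimately have h_at_0: "filterlim h (at 0) sequentially"
    by (intro filterlim_atI always_eventually)
  let ?q = "\<lambda>n z. (gamma_kernel (b + h n) z - gamma_kernel b z) / h n"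
  let ?w = "\<lambda>z. \<bar>ln z * gamma_kernel (b + b / 4) z\<bar> + 2 * \<bar>ln z * gamma_kernel b z\<bar>"
  have "(\<lambda>n. \<integral>z. ?q n z \<partial>lborel) \<longlonglongrightarrow> (\<integral>z. ln z * gamma_kernel b z \<partial>lborel)"
  proof (rule integral_dominated_convergence[where w = ?w])
    show "integrable lborel ?w"
      using b by (intro Bochner_Integration.integrable_add integrable_mult_right integrable_abs
          integrable_ln_gamma_kernel) auto
    show "AE z in lborel. (\<lambda>n. ?q n z) \<longlonglongrightarrow> ln z * gamma_kernel b z"
      using h_at_0 by (intro AE_I2 gamma_kernel_difference_quotient_tendsto)
    show "AE z in lborel. norm (?q n z) \<le> ?w z" for n
      by (intro AE_I2) (simp only: real_norm_def abs_gamma_kernel_difference_quotient_le[OF h_pos h_le])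
    show "(\<lambda>z. ln z * gamma_kernel b z) \<in> borel_measurable lborel" by measurable
    show "?q n \<in> borel_measurable lborel" for n by measurable
  qed
  moreover have "(\<integral>z. ?q n z \<partial>lborel) = (Gamma (b + h n) - Gamma b) / h n" for n
    using b h_pos[of n] by (simp add: integral_gamma_kernel integrable_gamma_kernel)
  ultimately have "(\<lambda>n. (Gamma (b + h n) - Gamma b) / h n) \<longlonglongrightarrow> (\<integral>z. ln z * gamma_kernel b z \<partial>lborel)"
    by (simp only:)
  moreover have "(\<lambda>n. (Gamma (b + h n) - Gamma b) / h n) \<longlonglongrightarrow> Gamma b * Digamma b"
  proof (rule filterlim_compose[OF DERIV_D h_at_0])
    show "(Gamma has_real_derivative Gamma b * Digamma b) (at b)"
    proof (rule has_field_derivative_Gamma)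
      show "b \<notin> \<int>\<^sub>\<le>\<^sub>0" using b by (auto elim!: nonpos_Ints_cases)
    qed
  qed
  ultimately show ?thesis by (rule LIMSEQ_unique)
qed

lemma g_std_eq_gamma_kernel: "g_std a z = gamma_kernel a z / Gamma a"
  by (simp add: g_std_def gamma_dens_def gamma_kernel_def)

lemma gamma_dens_eq_gamma_kernel:
  assumes "\<theta> > 0"
  shows "gamma_dens a \<theta> x = gamma_kernel a (x / \<theta>) / (Gamma a * \<theta>)"
proof (cases "x > 0")
  case True
  have "x powr (a - 1) = \<theta> powr (a - 1) * (x / \<theta>) powr (a - 1)"
    using True assms by (simp add: powr_divide)
  moreover have "\<theta> powr a = \<theta> powr (a - 1) * \<theta>"
    using assms by (simp add: powr_diff)
  ultimately show ?thesis
    using True assms by (simp add: gamma_dens_def gamma_kernel_def)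
next
  case False
  then show ?thesis using assms by (simp add: gamma_dens_def gamma_kernel_def zero_less_divide_iff)
qed

lemma borel_measurable_gamma_dens [measurable]: "gamma_dens a \<theta> \<in> borel_measurable borel"
  unfolding gamma_dens_def by measurable

lemma borel_measurable_g_std [measurable]: "g_std a \<in> borel_measurable borel"
  unfolding g_std_def by measurable

definition std_gamma :: "real \<Rightarrow> real measure" where
  "std_gamma a = density lborel (\<lambda>z. ennreal (g_std a z))"

lemma sets_std_gamma [simp, measurable_cong]: "sets (std_gamma a) = sets borel"
  by (simp add: std_gamma_def)

lemma space_std_gamma [simp]: "space (std_gamma a) = UNIV"
  by (simp add: std_gamma_def)

locale gamma_shape =
  fixes a :: real
  assumes shape_pos: "a > 0"
begin

lemma Gamma_shape_pos: "Gamma a > 0"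
  using Gamma_real_pos[OF shape_pos] .

lemma g_std_nonneg: "g_std a z \<ge> 0"
  using Gamma_shape_pos by (simp add: g_std_eq_gamma_kernel gamma_kernel_nonneg)

lemma g_std_pos: "z > 0 \<Longrightarrow> g_std a z > 0"
  using Gamma_shape_pos by (simp add: g_std_eq_gamma_kernel gamma_kernel_def)

lemma g_std_eq_0: "z \<le> 0 \<Longrightarrow> g_std a z = 0"
  by (simp add: g_std_eq_gamma_kernel gamma_kernel_def)

lemma integrable_g_std: "integrable lborel (g_std a)"
  unfolding g_std_eq_gamma_kernel using integrable_gamma_kernel[OF shape_pos] by simp

lemma nn_integral_g_std: "(\<integral>\<^sup>+z. ennreal (g_std a z) \<partial>lborel) = 1"
proof -
  have "(\<integral>z. g_std a z \<partial>lborel) = 1"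
    unfolding g_std_eq_gamma_kernel using integral_gamma_kernel[OF shape_pos] Gamma_shape_pos by simp
  then show ?thesis
    using nn_integral_eq_integral[OF integrable_g_std] g_std_nonneg by simp
qed

lemma prob_space_std_gamma: "prob_space (std_gamma a)"
  by (rule prob_spaceI) (simp add: std_gamma_def emeasure_density nn_integral_g_std)

lemma emeasure_std_gamma:
  "A \<in> sets borel \<Longrightarrow> emeasure (std_gamma a) A = (\<integral>\<^sup>+z. ennreal (g_std a z) * indicator A z \<partial>lborel)"
  unfolding std_gamma_def by (simp add: emeasure_density)

lemma integrable_std_gamma_iff:
  fixes f :: "real \<Rightarrow> real"
  assumes [measurable]: "f \<in> borel_measurable borel"
  shows "integrable (std_gamma a) f \<longleftrightarrow> integrable lborel (\<lambda>z. g_std a z * f z)"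
  unfolding std_gamma_def by (subst integrable_density) (auto simp: g_std_nonneg)

lemma integral_std_gamma:
  fixes f :: "real \<Rightarrow> real"
  assumes [measurable]: "f \<in> borel_measurable borel"
  shows "integral\<^sup>L (std_gamma a) f = (\<integral>z. g_std a z * f z \<partial>lborel)"
  unfolding std_gamma_def by (subst integral_density) (auto simp: g_std_nonneg)

lemma integrable_ln_std_gamma: "integrable (std_gamma a) ln"
  using integrable_divide_zero[OF integrable_ln_gamma_kernel[OF shape_pos], of "Gamma a"]
  by (simp add: integrable_std_gamma_iff g_std_eq_gamma_kernel mult.commute)

lemma integrable_ln_sq_std_gamma: "integrable (std_gamma a) (\<lambda>z. (ln z)\<^sup>2)"
  using integrable_divide_zero[OF integrable_ln_sq_gamma_kernel[OF shape_pos], of "Gamma a"]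
  by (simp add: integrable_std_gamma_iff g_std_eq_gamma_kernel mult.commute)

lemma integral_ln_std_gamma: "integral\<^sup>L (std_gamma a) ln = Digamma a"
  using integral_ln_gamma_kernel[OF shape_pos] Gamma_shape_pos
  by (simp add: integral_std_gamma g_std_eq_gamma_kernel mult.commute)

lemma AE_std_gamma_pos: "AE z in std_gamma a. z > 0"
  unfolding std_gamma_def
proof (subst AE_density)
  show "AE z in lborel. 0 < ennreal (g_std a z) \<longrightarrow> z > 0"
    using g_std_eq_0 by (intro AE_I2) (metis ennreal_0 less_irrefl not_less)
qed simp

lemma emeasure_std_gamma_Ioo_pos:
  assumes "0 \<le> l" "l < u"
  shows "emeasure (std_gamma a) {l<..<u} > 0"
proof (rule ccontr)
  assume "\<not> emeasure (std_gamma a) {l<..<u} > 0"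
  then have "AE z in lborel. ennreal (g_std a z) * indicator {l<..<u} z = 0"
    by (simp add: emeasure_std_gamma nn_integral_0_iff_AE)
  then have "AE z in lborel. z \<notin> {l<..<u}"
  proof (rule AE_mp, intro AE_I2 impI)
    fix z assume "ennreal (g_std a z) * indicator {l<..<u} z = 0"
    then show "z \<notin> {l<..<u}"
      using g_std_pos[of z] assms by (auto simp: indicator_def ennreal_eq_0_iff)
  qed
  then have "emeasure lborel {l<..<u} = 0"
    by (subst (asm) AE_iff_measurable[where N="{l<..<u}"]) auto
  then show False using assms by simp
qed

lemma emeasure_std_gamma_singleton: "emeasure (std_gamma a) {x} = 0"
proof -
  have "AE z in lborel. ennreal (g_std a z) * indicator {x} z = 0"
    using AE_lborel_singleton[of x] by eventually_elim (auto simp: indicator_def)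
  then show ?thesis by (simp add: emeasure_std_gamma nn_integral_0_iff_AE)
qed

lemma G_std_eq_measure: "G_std a z = measure (std_gamma a) {..z}"
proof -
  have int: "integrable lborel (\<lambda>t. g_std a t * indicator {..z} t)"
    by (rule integrable_real_mult_indicator) (simp_all add: integrable_g_std)
  have "emeasure (std_gamma a) {..z} = (\<integral>\<^sup>+t. ennreal (g_std a t * indicator {..z} t) \<partial>lborel)"
    by (subst emeasure_std_gamma) (auto intro!: nn_integral_cong simp: indicator_def)
  also have "\<dots> = ennreal (\<integral>t. g_std a t * indicator {..z} t \<partial>lborel)"
    by (rule nn_integral_eq_integral[OF int]) (simp add: g_std_nonneg)
  finally have "measure (std_gamma a) {..z} = (\<integral>t. g_std a t * indicator {..z} t \<partial>lborel)"
    by (simp add: measure_def integral_nonneg_AE g_std_nonneg)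
  then show ?thesis
    unfolding G_std_def set_lebesgue_integral_def by (simp add: mult.commute)
qed

lemma G_std_eq_measure_lessThan: "G_std a z = measure (std_gamma a) {..<z}"
proof -
  interpret prob_space "std_gamma a" by (rule prob_space_std_gamma)
  have "measure (std_gamma a) {..z} = measure (std_gamma a) {..<z} + measure (std_gamma a) {z}"
    by (subst finite_measure_Union[symmetric]) (auto simp: ivl_disj_un(2)[symmetric] Un_commute)
  then show ?thesis
    using emeasure_std_gamma_singleton[of z] by (simp add: G_std_eq_measure measure_def)
qed

lemma borel_measurable_G_std [measurable]: "G_std a \<in> borel_measurable borel"
proof (rule borel_measurable_mono)
  interpret prob_space "std_gamma a" by (rule prob_space_std_gamma)
  show "mono (G_std a)"
    unfolding mono_def G_std_eq_measure by (intro allI impI finite_measure_mono) auto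
qed

lemma density_gamma_dens_eq_distr:
  assumes "\<theta> > 0"
  shows "density lborel (\<lambda>x. ennreal (gamma_dens a \<theta> x)) = distr (std_gamma a) lborel ((*) \<theta>)"
proof (rule measure_eqI)
  fix A :: "real set" assume "A \<in> sets (density lborel (\<lambda>x. ennreal (gamma_dens a \<theta> x)))"
  then have A[measurable]: "A \<in> sets borel" by simp
  have [measurable]: "(*) \<theta> -` A \<in> sets borel"
    using measurable_sets[OF _ A, of "(*) \<theta>" borel] by simp
  have scale: "ennreal \<theta> * ennreal (gamma_dens a \<theta> (\<theta> * x)) = ennreal (g_std a x)" for x
  proof -
    have "\<theta> * gamma_dens a \<theta> (\<theta> * x) = g_std a x"
      using assms Gamma_shape_pos by (simp add: gamma_dens_eq_gamma_kernel g_std_eq_gamma_kernel)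
    then show ?thesis using assms by (simp flip: ennreal_mult')
  qed
  have "emeasure (density lborel (\<lambda>x. ennreal (gamma_dens a \<theta> x))) A
      = (\<integral>\<^sup>+x. ennreal (gamma_dens a \<theta> x) * indicator A x \<partial>lborel)"
    by (simp add: emeasure_density)
  also have "\<dots> = ennreal \<theta> * (\<integral>\<^sup>+x. ennreal (gamma_dens a \<theta> (\<theta> * x)) * indicator A (\<theta> * x) \<partial>lborel)"
    using assms by (subst nn_integral_real_affine[where c = \<theta> and t = 0]) auto
  also have "\<dots> = (\<integral>\<^sup>+x. ennreal (g_std a x) * indicator ((*) \<theta> -` A) x \<partial>lborel)"
    by (subst nn_integral_cmult[symmetric])
      (auto simp: mult.assoc[symmetric] scale indicator_def intro!: nn_integral_cong)
  also have "\<dots> = emeasure (distr (std_gamma a) lborel ((*) \<theta>)) A"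
    by (subst emeasure_distr) (auto simp: emeasure_std_gamma)
  finally show "emeasure (density lborel (\<lambda>x. ennreal (gamma_dens a \<theta> x))) A
      = emeasure (distr (std_gamma a) lborel ((*) \<theta>)) A" .
qed simp

end

section \<open>Sums of independent gamma variables\<close>

definition beta_prime_kernel :: "real \<Rightarrow> real \<Rightarrow> real \<Rightarrow> real" where
  "beta_prime_kernel a b u = (if u > 0 then u powr (b - 1) * (1 + u) powr (- (a + b)) else 0)"

lemma borel_measurable_beta_prime_kernel [measurable]:
  "beta_prime_kernel a b \<in> borel_measurable borel"
  unfolding beta_prime_kernel_def by measurable

lemma gamma_kernel_product_substitution:
  fixes z u a b :: real
  assumes z: "z > 0" and u: "u > 0"
  defines "x \<equiv> z / (1 + u)"
  shows "x * gamma_kernel a x * gamma_kernel b (x * u) / (1 + u)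
       = beta_prime_kernel a b u * gamma_kernel (a + b) z"
proof -
  have x: "x > 0" using z u by (simp add: x_def)
  have "x + x * u = x * (1 + u)" by (simp add: algebra_simps)
  also have "\<dots> = z" using u by (simp add: x_def)
  finally have "exp (- x) * exp (- (x * u)) = exp (- z)"
    by (metis exp_add minus_add_distrib)
  moreover have "x * x powr (a - 1) * (x * u) powr (b - 1) / (1 + u)
      = u powr (b - 1) * (1 + u) powr (- (a + b)) * z powr (a + b - 1)"
  proof -
    have "x * x powr (a - 1) * (x * u) powr (b - 1) / (1 + u)
        = x powr (a + b - 1) * u powr (b - 1) / (1 + u)"
      using x u by (simp add: powr_mult powr_add[symmetric] powr_mult_base field_simps)
    also have "\<dots> = u powr (b - 1) * z powr (a + b - 1) / ((1 + u) powr (a + b - 1) * (1 + u))"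
      using z u by (simp add: x_def powr_divide)
    also have "(1 + u) powr (a + b - 1) * (1 + u) = (1 + u) powr (a + b)"
      using u by (simp add: powr_diff)
    finally show ?thesis by (subst powr_minus_divide) simp
  qed
  moreover have "x * gamma_kernel a x * gamma_kernel b (x * u) / (1 + u)
      = (x * x powr (a - 1) * (x * u) powr (b - 1) / (1 + u)) * (exp (- x) * exp (- (x * u)))"
    using x u by (simp add: gamma_kernel_def mult_ac)
  ultimately show ?thesis
    using z u by (simp add: gamma_kernel_def beta_prime_kernel_def mult_ac)
qed

lemma nn_integral_gamma_kernel_product_substitution:
  fixes h :: "real \<Rightarrow> ennreal"
  assumes [measurable]: "h \<in> borel_measurable borel"
  shows "(\<integral>\<^sup>+x. ennreal (x * gamma_kernel a x * gamma_kernel b (x * u)) * h (x + x * u) \<partial>lborel)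
      = ennreal (beta_prime_kernel a b u) * (\<integral>\<^sup>+z. ennreal (gamma_kernel (a + b) z) * h z \<partial>lborel)"
proof (cases "u > 0")
  case True
  let ?F = "\<lambda>x. ennreal (x * gamma_kernel a x * gamma_kernel b (x * u)) * h (x + x * u)"
  have "(\<integral>\<^sup>+x. ?F x \<partial>lborel) = ennreal (1 / (1 + u)) * (\<integral>\<^sup>+z. ?F (z / (1 + u)) \<partial>lborel)"
    using True by (subst nn_integral_real_affine[where c = "1 / (1 + u)" and t = 0]) auto
  also have "\<dots> = (\<integral>\<^sup>+z. ennreal (beta_prime_kernel a b u) * (ennreal (gamma_kernel (a + b) z) * h z) \<partial>lborel)"
  proof (subst nn_integral_cmult[symmetric], simp, intro nn_integral_cong)
    fix z :: real
    have "z / (1 + u) + z / (1 + u) * u = z / (1 + u) * (1 + u)"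
      by (simp add: distrib_left)
    also have "\<dots> = z" using True by simp
    finally have sum: "z / (1 + u) + z / (1 + u) * u = z" .
    have "1 / (1 + u) * (z / (1 + u) * gamma_kernel a (z / (1 + u)) * gamma_kernel b (z / (1 + u) * u))
        = beta_prime_kernel a b u * gamma_kernel (a + b) z"
    proof (cases "z > 0")
      case z: True
      show ?thesis
        using gamma_kernel_product_substitution[OF z True, of a b] by simp
    next
      case False
      then have "z / (1 + u) \<le> 0" using True by (intro divide_nonpos_pos) auto
      then show ?thesis using False by (simp add: gamma_kernel_def)
    qed
    then show "ennreal (1 / (1 + u)) * ?F (z / (1 + u))
        = ennreal (beta_prime_kernel a b u) * (ennreal (gamma_kernel (a + b) z) * h z)"
      using True by (simp only: sum)
        (simp add: mult.assoc[symmetric] ennreal_mult'[symmetric] beta_prime_kernel_def)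
  qed
  finally show ?thesis by (simp add: nn_integral_cmult)
next
  case False
  then have "x * gamma_kernel a x * gamma_kernel b (x * u) = 0" for x
    by (cases "x > 0") (auto simp: gamma_kernel_def zero_less_mult_iff)
  then have "(\<lambda>x. ennreal (x * gamma_kernel a x * gamma_kernel b (x * u)) * h (x + x * u)) = (\<lambda>_. 0)"
    by (intro ext) (simp only: ennreal_0 mult_zero_left)
  then show ?thesis using False by (simp add: beta_prime_kernel_def)
qed

lemma nn_integral_gamma_kernel_convolution:
  fixes h :: "real \<Rightarrow> ennreal"
  assumes [measurable]: "h \<in> borel_measurable borel"
  shows "(\<integral>\<^sup>+x. \<integral>\<^sup>+y. ennreal (gamma_kernel a x * gamma_kernel b y) * h (x + y) \<partial>lborel \<partial>lborel)
       = (\<integral>\<^sup>+u. ennreal (beta_prime_kernel a b u) \<partial>lborel)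
         * (\<integral>\<^sup>+z. ennreal (gamma_kernel (a + b) z) * h z \<partial>lborel)"
proof -
  \<comment> \<open>Substitute \<open>y = x u\<close>, swap the integrals, then substitute \<open>x = z / (1 + u)\<close>.\<close>
  let ?F = "\<lambda>x u. ennreal (x * gamma_kernel a x * gamma_kernel b (x * u)) * h (x + x * u)"
  have inner: "(\<integral>\<^sup>+y. ennreal (gamma_kernel a x * gamma_kernel b y) * h (x + y) \<partial>lborel)
      = (\<integral>\<^sup>+u. ?F x u \<partial>lborel)" for x
  proof (cases "x > 0")
    case True
    have "(\<integral>\<^sup>+y. ennreal (gamma_kernel a x * gamma_kernel b y) * h (x + y) \<partial>lborel)
        = ennreal x * (\<integral>\<^sup>+u. ennreal (gamma_kernel a x * gamma_kernel b (x * u)) * h (x + x * u) \<partial>lborel)"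
      using True by (subst nn_integral_real_affine[where c = x and t = 0]) auto
    also have "\<dots> = (\<integral>\<^sup>+u. ?F x u \<partial>lborel)"
      using True by (subst nn_integral_cmult[symmetric])
        (auto simp: mult.assoc ennreal_mult gamma_kernel_nonneg intro!: nn_integral_cong)
    finally show ?thesis .
  qed (simp add: gamma_kernel_def)
  have "(\<integral>\<^sup>+x. \<integral>\<^sup>+y. ennreal (gamma_kernel a x * gamma_kernel b y) * h (x + y) \<partial>lborel \<partial>lborel)
      = (\<integral>\<^sup>+x. \<integral>\<^sup>+u. ?F x u \<partial>lborel \<partial>lborel)"
    by (simp only: inner)
  also have "\<dots> = (\<integral>\<^sup>+u. \<integral>\<^sup>+x. ?F x u \<partial>lborel \<partial>lborel)"
    by (rule lborel_pair.Fubini'[symmetric]) measurable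
  also have "\<dots> = (\<integral>\<^sup>+u. ennreal (beta_prime_kernel a b u) \<partial>lborel)
      * (\<integral>\<^sup>+z. ennreal (gamma_kernel (a + b) z) * h z \<partial>lborel)"
    unfolding nn_integral_gamma_kernel_product_substitution[OF assms]
    by (rule nn_integral_multc) measurable
  finally show ?thesis .
qed

lemma nn_integral_sum_std_gamma:
  assumes "a > 0" "b > 0" and [measurable]: "h \<in> borel_measurable borel"
  shows "(\<integral>\<^sup>+p. h (fst p + snd p) \<partial>(std_gamma a \<Otimes>\<^sub>M std_gamma b))
      = ennreal (1 / (Gamma a * Gamma b)) * (\<integral>\<^sup>+u. ennreal (beta_prime_kernel a b u) \<partial>lborel)
        * (\<integral>\<^sup>+z. ennreal (gamma_kernel (a + b) z) * h z \<partial>lborel)"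
proof -
  interpret A: gamma_shape a by unfold_locales fact
  interpret B: gamma_shape b by unfold_locales fact
  have "std_gamma a \<Otimes>\<^sub>M std_gamma b
      = density (lborel \<Otimes>\<^sub>M lborel) (\<lambda>(x, y). ennreal (g_std a x) * ennreal (g_std b y))"
    unfolding std_gamma_def
    by (rule pair_measure_density) (simp_all add: prob_space_imp_sigma_finite
        B.prob_space_std_gamma[unfolded std_gamma_def] lborel.sigma_finite_measure_axioms)
  then have "(\<integral>\<^sup>+p. h (fst p + snd p) \<partial>(std_gamma a \<Otimes>\<^sub>M std_gamma b))
      = (\<integral>\<^sup>+x. \<integral>\<^sup>+y. ennreal (g_std a x) * ennreal (g_std b y) * h (x + y) \<partial>lborel \<partial>lborel)"
    by (simp add: nn_integral_density lborel.nn_integral_fst[symmetric] case_prod_beta)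
  also have "\<dots> = (\<integral>\<^sup>+x. \<integral>\<^sup>+y. ennreal (1 / (Gamma a * Gamma b))
      * (ennreal (gamma_kernel a x * gamma_kernel b y) * h (x + y)) \<partial>lborel \<partial>lborel)"
    using A.Gamma_shape_pos B.Gamma_shape_pos
    by (intro nn_integral_cong)
      (simp add: g_std_eq_gamma_kernel gamma_kernel_nonneg mult.assoc[symmetric] flip: ennreal_mult)
  also have "\<dots> = ennreal (1 / (Gamma a * Gamma b)) * (\<integral>\<^sup>+u. ennreal (beta_prime_kernel a b u) \<partial>lborel)
      * (\<integral>\<^sup>+z. ennreal (gamma_kernel (a + b) z) * h z \<partial>lborel)"
    by (simp add: nn_integral_cmult nn_integral_gamma_kernel_convolution mult.assoc)
  finally show ?thesis .
qed

lemma distr_sum_std_gamma: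
  assumes "a > 0" "b > 0"
  shows "distr (std_gamma a \<Otimes>\<^sub>M std_gamma b) borel (\<lambda>p. fst p + snd p) = std_gamma (a + b)"
proof -
  interpret AB: gamma_shape "a + b" using assms by unfold_locales simp
  interpret pair_prob_space "std_gamma a" "std_gamma b"
    using gamma_shape.prob_space_std_gamma assms
    by (simp add: gamma_shape_def pair_prob_space_def pair_sigma_finite_def prob_space_imp_sigma_finite)
  define \<kappa> where
    "\<kappa> = ennreal (1 / (Gamma a * Gamma b)) * (\<integral>\<^sup>+u. ennreal (beta_prime_kernel a b u) \<partial>lborel)"
  note sum = nn_integral_sum_std_gamma[OF assms, folded \<kappa>_def]
  \<comment> \<open>\<open>\<kappa>\<close> is a Beta integral; it is identified by comparing total masses instead.\<close>
  have "\<kappa> * ennreal (Gamma (a + b)) = 1"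
    using sum[of "\<lambda>_. 1"] emeasure_space_1 assms
    by (simp add: nn_integral_eq_integral integrable_gamma_kernel integral_gamma_kernel
        gamma_kernel_nonneg)
  moreover have "ennreal (Gamma (a + b)) * ennreal (1 / Gamma (a + b)) = 1"
    using AB.Gamma_shape_pos by (simp flip: ennreal_mult)
  ultimately have \<kappa>: "\<kappa> = ennreal (1 / Gamma (a + b))"
    by (metis mult.assoc mult_1 mult.right_neutral)
  show ?thesis
  proof (rule measure_eqI)
    fix A :: "real set" assume "A \<in> sets (distr (std_gamma a \<Otimes>\<^sub>M std_gamma b) borel (\<lambda>p. fst p + snd p))"
    then have [measurable]: "A \<in> sets borel" by simp
    have "emeasure (distr (std_gamma a \<Otimes>\<^sub>M std_gamma b) borel (\<lambda>p. fst p + snd p)) A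
        = (\<integral>\<^sup>+z. indicator A z \<partial>distr (std_gamma a \<Otimes>\<^sub>M std_gamma b) borel (\<lambda>p. fst p + snd p))"
      by (rule nn_integral_indicator[symmetric]) simp
    also have "\<dots> = (\<integral>\<^sup>+p. indicator A (fst p + snd p) \<partial>(std_gamma a \<Otimes>\<^sub>M std_gamma b))"
      by (rule nn_integral_distr) simp_all
    also have "\<dots> = (\<integral>\<^sup>+z. ennreal (1 / Gamma (a + b)) * (ennreal (gamma_kernel (a + b) z) * indicator A z) \<partial>lborel)"
      by (simp add: sum \<kappa> nn_integral_cmult)
    also have "\<dots> = emeasure (std_gamma (a + b)) A"
      using AB.Gamma_shape_pos unfolding AB.emeasure_std_gamma[OF \<open>A \<in> sets borel\<close>]
      by (intro nn_integral_cong) (simp add: g_std_eq_gamma_kernel mult.assoc[symmetric] flip: ennreal_mult')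
    finally show "emeasure (distr (std_gamma a \<Otimes>\<^sub>M std_gamma b) borel (\<lambda>p. fst p + snd p)) A
        = emeasure (std_gamma (a + b)) A" .
  qed simp
qed

section \<open>Risk of the estimators \<open>delta c\<close>\<close>

text \<open>
  With \<open>X\<^sub>i = \<theta>\<^sub>i V\<^sub>i\<close>, \<open>ln Z\<^sub>2 - H\<^sub>S(\<theta>) = ln V\<^sub>j\<close> for the index \<open>j\<close> attaining \<open>Z\<^sub>2\<close>;
  ties go to \<open>j = 1\<close>, as in \<open>H_S\<close>.
\<close>

definition ln_at_max :: "real \<Rightarrow> real \<Rightarrow> real \<times> real \<Rightarrow> real" where
  "ln_at_max \<theta>1 \<theta>2 p = (if \<theta>2 * snd p \<le> \<theta>1 * fst p then ln (fst p) else ln (snd p))"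

lemma borel_measurable_ln_at_max [measurable]:
  "ln_at_max \<theta>1 \<theta>2 \<in> borel_measurable (borel \<Otimes>\<^sub>M borel)"
  unfolding ln_at_max_def by measurable

context gamma_shape
begin

abbreviation MM :: "(real \<times> real) measure" where
  "MM \<equiv> std_gamma a \<Otimes>\<^sub>M std_gamma a"

lemma pair_prob_space_MM: "pair_prob_space (std_gamma a) (std_gamma a)"
  using prob_space_std_gamma
  by (simp add: pair_prob_space_def pair_sigma_finite_def prob_space_imp_sigma_finite)

lemma prob_space_MM: "prob_space MM"
proof -
  interpret pair_prob_space "std_gamma a" "std_gamma a" by (rule pair_prob_space_MM)
  show ?thesis by unfold_locales
qed

lemma sets_MM [measurable_cong]: "sets MM = sets (borel \<Otimes>\<^sub>M borel)"
  by (intro sets_pair_measure_cong) simp_all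

lemma space_MM [simp]: "space MM = UNIV"
  by (simp add: space_pair_measure)

lemma integral_MM_proj:
  fixes f :: "real \<Rightarrow> real"
  assumes \<pi>: "\<pi> = fst \<or> \<pi> = snd"
    and [measurable]: "f \<in> borel_measurable borel" and f: "integrable (std_gamma a) f"
  shows "integrable MM (\<lambda>p. f (\<pi> p))" "(\<integral>p. f (\<pi> p) \<partial>MM) = integral\<^sup>L (std_gamma a) f"
proof -
  interpret prob_space "std_gamma a" by (rule prob_space_std_gamma)
  have [measurable]: "\<pi> \<in> MM \<rightarrow>\<^sub>M std_gamma a" using \<pi> by auto
  have "distr MM (std_gamma a) \<pi> = std_gamma a"
    using \<pi> distr_pair_fst distr_pair_snd[OF prob_space_imp_sigma_finite[OF prob_space_std_gamma]]
    by auto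
  then show "integrable MM (\<lambda>p. f (\<pi> p))" "(\<integral>p. f (\<pi> p) \<partial>MM) = integral\<^sup>L (std_gamma a) f"
    using f integrable_distr_eq[of \<pi> MM "std_gamma a" f] integral_distr[of \<pi> MM "std_gamma a" f]
    by simp_all
qed

lemma ln_proj_moments:
  assumes "\<pi> = fst \<or> \<pi> = snd"
  shows "integrable MM (\<lambda>p. ln (\<pi> p))" "integrable MM (\<lambda>p. (ln (\<pi> p))\<^sup>2)"
    and "(\<integral>p. ln (\<pi> p) \<partial>MM) = Digamma a"
  using integral_MM_proj[OF assms _ integrable_ln_std_gamma]
    integral_MM_proj[OF assms _ integrable_ln_sq_std_gamma] integral_ln_std_gamma
  by simp_all

lemma AE_MM_pos: "AE p in MM. fst p > 0 \<and> snd p > 0"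
proof -
  interpret pair_prob_space "std_gamma a" "std_gamma a" by (rule pair_prob_space_MM)
  have "AE x in std_gamma a. AE y in std_gamma a. x > 0 \<and> y > 0"
    using AE_std_gamma_pos by eventually_elim (use AE_std_gamma_pos in auto)
  moreover have "Measurable.pred MM (\<lambda>p. fst p > 0 \<and> snd p > 0)" by measurable
  ultimately show ?thesis by (intro AE_pair_measure) (simp_all add: pred_def)
qed

lemma emeasure_MM_box_pos:
  assumes "0 \<le> l1" "l1 < u1" "0 \<le> l2" "l2 < u2"
  shows "emeasure MM ({l1<..<u1} \<times> {l2<..<u2}) > 0"
proof -
  interpret prob_space "std_gamma a" by (rule prob_space_std_gamma)
  show ?thesis
    using emeasure_std_gamma_Ioo_pos[of l1 u1] emeasure_std_gamma_Ioo_pos[of l2 u2] assms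
    by (simp add: emeasure_pair_measure_Times zero_less_iff_neq_zero)
qed

lemma gamma_dens_nonneg: "\<theta> > 0 \<Longrightarrow> gamma_dens a \<theta> x \<ge> 0"
  using Gamma_shape_pos by (simp add: gamma_dens_eq_gamma_kernel gamma_kernel_nonneg)

lemma density_gamma_dens_pair_eq_distr:
  assumes "\<theta>1 > 0" "\<theta>2 > 0"
  shows "density (lborel \<Otimes>\<^sub>M lborel) (\<lambda>p. ennreal (gamma_dens a \<theta>1 (fst p) * gamma_dens a \<theta>2 (snd p)))
       = distr MM (lborel \<Otimes>\<^sub>M lborel) (\<lambda>(x, y). (\<theta>1 * x, \<theta>2 * y))"
proof -
  let ?D = "\<lambda>\<theta>. density lborel (\<lambda>x. ennreal (gamma_dens a \<theta> x))"
  have sf: "sigma_finite_measure (distr (std_gamma a) lborel ((*) \<theta>2))"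
    by (intro prob_space_imp_sigma_finite prob_space.prob_space_distr[OF prob_space_std_gamma]) simp
  have "density (lborel \<Otimes>\<^sub>M lborel) (\<lambda>p. ennreal (gamma_dens a \<theta>1 (fst p) * gamma_dens a \<theta>2 (snd p)))
      = density (lborel \<Otimes>\<^sub>M lborel) (\<lambda>(x, y). ennreal (gamma_dens a \<theta>1 x) * ennreal (gamma_dens a \<theta>2 y))"
    using assms by (intro density_cong) (auto simp: ennreal_mult gamma_dens_nonneg)
  also have "\<dots> = ?D \<theta>1 \<Otimes>\<^sub>M ?D \<theta>2"
    using sf by (intro pair_measure_density[symmetric])
      (simp_all add: density_gamma_dens_eq_distr assms lborel.sigma_finite_measure_axioms)
  also have "\<dots> = distr (std_gamma a) lborel ((*) \<theta>1) \<Otimes>\<^sub>M distr (std_gamma a) lborel ((*) \<theta>2)"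
    by (simp add: density_gamma_dens_eq_distr assms)
  also have "\<dots> = distr MM (lborel \<Otimes>\<^sub>M lborel) (\<lambda>(x, y). (\<theta>1 * x, \<theta>2 * y))"
    using sf by (intro pair_measure_distr) simp_all
  finally show ?thesis .
qed

lemma risk_delta_eq_nn_integral:
  assumes \<theta>: "\<theta>1 > 0" "\<theta>2 > 0"
  shows "risk a \<theta>1 \<theta>2 (delta c) = (\<integral>\<^sup>+p. ennreal ((ln_at_max \<theta>1 \<theta>2 p - c)\<^sup>2) \<partial>MM)"
proof -
  let ?sq = "\<lambda>x1 x2. (delta c x1 x2 - H_S \<theta>1 \<theta>2 x1 x2)\<^sup>2"
  have [measurable]: "(\<lambda>p. ?sq (fst p) (snd p)) \<in> borel_measurable (borel \<Otimes>\<^sub>M borel)"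
    unfolding delta_def H_S_def by measurable
  have "risk a \<theta>1 \<theta>2 (delta c) = (\<integral>\<^sup>+p. ennreal (?sq (fst p) (snd p)) \<partial>density (lborel \<Otimes>\<^sub>M lborel)
      (\<lambda>p. ennreal (gamma_dens a \<theta>1 (fst p) * gamma_dens a \<theta>2 (snd p))))"
    unfolding risk_def
    by (subst nn_integral_density) (auto intro!: nn_integral_cong
        simp: ennreal_mult'[symmetric] gamma_dens_nonneg \<theta> mult_ac)
  also have "\<dots> = (\<integral>\<^sup>+p. ennreal (?sq (\<theta>1 * fst p) (\<theta>2 * snd p)) \<partial>MM)"
    unfolding density_gamma_dens_pair_eq_distr[OF \<theta>]
    by (subst nn_integral_distr) (auto simp: case_prod_beta)
  also have "\<dots> = (\<integral>\<^sup>+p. ennreal ((ln_at_max \<theta>1 \<theta>2 p - c)\<^sup>2) \<partial>MM)"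
    using AE_MM_pos
  proof (intro nn_integral_cong_AE, eventually_elim)
    case (elim p)
    then show ?case
      using \<theta> by (simp add: delta_def H_S_def ln_at_max_def max_def ln_mult)
  qed
  finally show ?thesis .
qed

lemma integrable_ln_at_max_sq: "integrable MM (\<lambda>p. (ln_at_max \<theta>1 \<theta>2 p)\<^sup>2)"
proof (rule Bochner_Integration.integrable_bound)
  show "integrable MM (\<lambda>p. (ln (fst p))\<^sup>2 + (ln (snd p))\<^sup>2)"
    using ln_proj_moments(2)[of fst] ln_proj_moments(2)[of snd] by simp
  show "AE p in MM. norm ((ln_at_max \<theta>1 \<theta>2 p)\<^sup>2) \<le> norm ((ln (fst p))\<^sup>2 + (ln (snd p))\<^sup>2)"
    by (intro AE_I2) (simp add: ln_at_max_def)
qed measurable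

lemma integrable_ln_at_max: "integrable MM (ln_at_max \<theta>1 \<theta>2)"
proof -
  interpret prob_space MM by (rule prob_space_MM)
  show ?thesis by (rule square_integrable_imp_integrable) (simp_all add: integrable_ln_at_max_sq)
qed

definition mean_ln_at_max :: "real \<Rightarrow> real \<Rightarrow> real" where
  "mean_ln_at_max \<theta>1 \<theta>2 = (\<integral>p. ln_at_max \<theta>1 \<theta>2 p \<partial>MM)"

lemma risk_delta_eq:
  assumes "\<theta>1 > 0" "\<theta>2 > 0"
  shows "risk a \<theta>1 \<theta>2 (delta c) = ennreal (\<integral>p. (ln_at_max \<theta>1 \<theta>2 p - c)\<^sup>2 \<partial>MM)"
proof -
  interpret prob_space MM by (rule prob_space_MM)
  have "(\<lambda>p. (ln_at_max \<theta>1 \<theta>2 p - c)\<^sup>2)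
      = (\<lambda>p. (ln_at_max \<theta>1 \<theta>2 p)\<^sup>2 - 2 * c * ln_at_max \<theta>1 \<theta>2 p + c\<^sup>2)"
    by (simp add: power2_diff algebra_simps)
  then have "integrable MM (\<lambda>p. (ln_at_max \<theta>1 \<theta>2 p - c)\<^sup>2)"
    using integrable_ln_at_max_sq integrable_ln_at_max by simp
  then show ?thesis
    unfolding risk_delta_eq_nn_integral[OF assms] by (rule nn_integral_eq_integral) simp
qed

lemma risk_delta_le_iff:
  assumes "\<theta>1 > 0" "\<theta>2 > 0"
  shows "risk a \<theta>1 \<theta>2 (delta u) \<le> risk a \<theta>1 \<theta>2 (delta v)
      \<longleftrightarrow> (u - v) * (u + v - 2 * mean_ln_at_max \<theta>1 \<theta>2) \<le> 0"
  and risk_delta_less_iff: "risk a \<theta>1 \<theta>2 (delta u) < risk a \<theta>1 \<theta>2 (delta v)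
      \<longleftrightarrow> (u - v) * (u + v - 2 * mean_ln_at_max \<theta>1 \<theta>2) < 0"
proof -
  interpret prob_space MM by (rule prob_space_MM)
  note diff = integral_sq_diff_shift[OF integrable_ln_at_max integrable_ln_at_max_sq, of \<theta>1 \<theta>2 u v]
  show "risk a \<theta>1 \<theta>2 (delta u) \<le> risk a \<theta>1 \<theta>2 (delta v)
      \<longleftrightarrow> (u - v) * (u + v - 2 * mean_ln_at_max \<theta>1 \<theta>2) \<le> 0"
    using diff by (auto simp: risk_delta_eq assms integral_nonneg_AE mean_ln_at_max_def)
  show "risk a \<theta>1 \<theta>2 (delta u) < risk a \<theta>1 \<theta>2 (delta v)
      \<longleftrightarrow> (u - v) * (u + v - 2 * mean_ln_at_max \<theta>1 \<theta>2) < 0"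
    using diff
    by (auto simp: risk_delta_eq assms integral_nonneg_AE mean_ln_at_max_def ennreal_less_iff)
qed

end

section \<open>Bounds on the mean of \<open>ln_at_max\<close>\<close>

context gamma_shape
begin

lemma Digamma_less_mean_ln_at_max_of_le:
  assumes \<theta>: "0 < \<theta>2" "\<theta>2 \<le> \<theta>1"
  shows "Digamma a < mean_ln_at_max \<theta>1 \<theta>2"
proof -
  let ?f = "\<lambda>p. ln_at_max \<theta>1 \<theta>2 p - ln (fst p)"
  have "(\<integral>p. ?f p \<partial>MM) > 0"
  proof (rule integral_pos_of_pos_on[where S = "{0<..<1} \<times> {\<theta>1 / \<theta>2<..<\<theta>1 / \<theta>2 + 1}"])
    show "integrable MM ?f"
      using integrable_ln_at_max ln_proj_moments(1)[of fst] by simp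
    show "AE p in MM. ?f p \<ge> 0"
      using AE_MM_pos
    proof eventually_elim
      case (elim p)
      show ?case
      proof (cases "\<theta>2 * snd p \<le> \<theta>1 * fst p")
        case False
        moreover have "\<theta>2 * fst p \<le> \<theta>1 * fst p"
          using \<open>\<theta>2 \<le> \<theta>1\<close> elim by (simp add: mult_right_mono)
        ultimately have "\<theta>2 * fst p < \<theta>2 * snd p" by linarith
        then have "fst p < snd p" using \<theta> by simp
        then show ?thesis using False elim by (simp add: ln_at_max_def)
      qed (simp add: ln_at_max_def)
    qed
    show "emeasure MM ({0<..<1} \<times> {\<theta>1 / \<theta>2<..<\<theta>1 / \<theta>2 + 1}) > 0"
      using \<theta> by (intro emeasure_MM_box_pos) simp_all
    fix p :: "real \<times> real" assume "p \<in> {0<..<1} \<times> {\<theta>1 / \<theta>2<..<\<theta>1 / \<theta>2 + 1}"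
    then have p: "0 < fst p" "fst p < 1" "\<theta>1 / \<theta>2 < snd p" by auto
    have "\<theta>1 * fst p < \<theta>1" using p \<theta> by simp
    moreover have "\<theta>1 < \<theta>2 * snd p" using p \<theta> by (simp add: divide_less_eq mult.commute)
    moreover have "1 \<le> \<theta>1 / \<theta>2" using \<theta> by simp
    ultimately have "\<theta>1 * fst p < \<theta>2 * snd p" "fst p < snd p" using p by linarith+
    then show "?f p > 0" using p by (simp add: ln_at_max_def)
  qed simp
  then show ?thesis
    using integrable_ln_at_max ln_proj_moments[of fst] by (simp add: mean_ln_at_max_def)
qed

lemma Digamma_less_mean_ln_at_max_of_less:
  assumes \<theta>: "0 < \<theta>1" "\<theta>1 < \<theta>2"
  shows "Digamma a < mean_ln_at_max \<theta>1 \<theta>2"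
proof -
  let ?f = "\<lambda>p. ln_at_max \<theta>1 \<theta>2 p - ln (snd p)"
  have "(\<integral>p. ?f p \<partial>MM) > 0"
  proof (rule integral_pos_of_pos_on[where S = "{\<theta>2 / \<theta>1<..<\<theta>2 / \<theta>1 + 1} \<times> {0<..<1}"])
    show "integrable MM ?f"
      using integrable_ln_at_max ln_proj_moments(1)[of snd] by simp
    show "AE p in MM. ?f p \<ge> 0"
      using AE_MM_pos
    proof eventually_elim
      case (elim p)
      show ?case
      proof (cases "\<theta>2 * snd p \<le> \<theta>1 * fst p")
        case True
        moreover have "\<theta>1 * snd p \<le> \<theta>2 * snd p"
          using \<open>\<theta>1 < \<theta>2\<close> elim by (simp add: mult_right_mono)
        ultimately have "\<theta>1 * snd p \<le> \<theta>1 * fst p" by linarith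
        then have "snd p \<le> fst p" using \<theta> by simp
        then show ?thesis using True elim by (simp add: ln_at_max_def)
      qed (simp add: ln_at_max_def)
    qed
    show "emeasure MM ({\<theta>2 / \<theta>1<..<\<theta>2 / \<theta>1 + 1} \<times> {0<..<1}) > 0"
      using \<theta> by (intro emeasure_MM_box_pos) simp_all
    fix p :: "real \<times> real" assume "p \<in> {\<theta>2 / \<theta>1<..<\<theta>2 / \<theta>1 + 1} \<times> {0<..<1}"
    then have p: "0 < snd p" "snd p < 1" "\<theta>2 / \<theta>1 < fst p" by auto
    have "\<theta>2 * snd p < \<theta>2" using p \<theta> by simp
    moreover have "\<theta>2 < \<theta>1 * fst p" using p \<theta> by (simp add: divide_less_eq mult.commute)
    moreover have "1 \<le> \<theta>2 / \<theta>1" using \<theta> by simp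
    ultimately have "\<theta>2 * snd p \<le> \<theta>1 * fst p" "snd p < fst p" using p by linarith+
    then show "?f p > 0" using p by (simp add: ln_at_max_def)
  qed simp
  then show ?thesis
    using integrable_ln_at_max ln_proj_moments[of snd] by (simp add: mean_ln_at_max_def)
qed

lemma Digamma_less_mean_ln_at_max:
  assumes "\<theta>1 > 0" "\<theta>2 > 0"
  shows "Digamma a < mean_ln_at_max \<theta>1 \<theta>2"
proof (cases "\<theta>2 \<le> \<theta>1")
  case True
  with assms show ?thesis by (intro Digamma_less_mean_ln_at_max_of_le)
next
  case False
  with assms show ?thesis by (intro Digamma_less_mean_ln_at_max_of_less) simp_all
qed

lemma integrable_max_ln: "integrable MM (\<lambda>p. max (ln (fst p)) (ln (snd p)))"
proof (rule Bochner_Integration.integrable_bound)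
  show "integrable MM (\<lambda>p. \<bar>ln (fst p)\<bar> + \<bar>ln (snd p)\<bar>)"
    using ln_proj_moments(1)[of fst] ln_proj_moments(1)[of snd] by simp
  show "AE p in MM. norm (max (ln (fst p)) (ln (snd p))) \<le> norm (\<bar>ln (fst p)\<bar> + \<bar>ln (snd p)\<bar>)"
    by (intro AE_I2) (auto simp: max_def)
qed measurable

lemma mean_ln_at_max_le: "mean_ln_at_max \<theta>1 \<theta>2 \<le> (\<integral>p. max (ln (fst p)) (ln (snd p)) \<partial>MM)"
  unfolding mean_ln_at_max_def
  by (rule integral_mono[OF integrable_ln_at_max integrable_max_ln]) (simp add: ln_at_max_def)

lemma mean_ln_at_max_1_1: "mean_ln_at_max 1 1 = (\<integral>p. max (ln (fst p)) (ln (snd p)) \<partial>MM)"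
  unfolding mean_ln_at_max_def
  using AE_MM_pos by (intro integral_cong_AE) (auto simp: ln_at_max_def max_def)

lemma mean_ln_at_max_tendsto: "(\<lambda>n. mean_ln_at_max 1 (inverse (Suc n))) \<longlonglongrightarrow> Digamma a"
proof -
  have "(\<lambda>n. \<integral>p. ln_at_max 1 (inverse (Suc n)) p \<partial>MM) \<longlonglongrightarrow> (\<integral>p. ln (fst p) \<partial>MM)"
  proof (rule integral_dominated_convergence[where w = "\<lambda>p. \<bar>ln (fst p)\<bar> + \<bar>ln (snd p)\<bar>"])
    show "integrable MM (\<lambda>p. \<bar>ln (fst p)\<bar> + \<bar>ln (snd p)\<bar>)"
      using ln_proj_moments(1)[of fst] ln_proj_moments(1)[of snd] by simp
    show "AE p in MM. norm (ln_at_max 1 (inverse (Suc n)) p) \<le> \<bar>ln (fst p)\<bar> + \<bar>ln (snd p)\<bar>" for n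
      by (intro AE_I2) (simp add: ln_at_max_def)
    show "AE p in MM. (\<lambda>n. ln_at_max 1 (inverse (Suc n)) p) \<longlonglongrightarrow> ln (fst p)"
      using AE_MM_pos
    proof eventually_elim
      case (elim p)
      have "(\<lambda>n. inverse (Suc n) * snd p) \<longlonglongrightarrow> 0 * snd p"
        by (intro tendsto_mult LIMSEQ_inverse_real_of_nat tendsto_const)
      then have "eventually (\<lambda>n. inverse (Suc n) * snd p < fst p) sequentially"
        using elim by (intro order_tendstoD(2)) auto
      then have "eventually (\<lambda>n. ln_at_max 1 (inverse (Suc n)) p = ln (fst p)) sequentially"
        by eventually_elim (simp add: ln_at_max_def)
      then show ?case by (rule tendsto_eventually)
    qed
  qed measurable
  then show ?thesis by (simp add: mean_ln_at_max_def ln_proj_moments)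
qed

lemma integral_ln_mult_G_std: "(\<integral>x. ln x * G_std a x \<partial>std_gamma a) = c2 a / 2"
proof -
  have "(\<integral>z. g_std a z * (ln z * G_std a z) \<partial>lborel)
      = (\<integral>z. indicator {0<..} z *\<^sub>R (ln z * G_std a z * g_std a z) \<partial>lborel)"
  proof (intro Bochner_Integration.integral_cong refl)
    fix z :: real
    show "g_std a z * (ln z * G_std a z) = indicator {0<..} z *\<^sub>R (ln z * G_std a z * g_std a z)"
      by (cases "z > 0") (simp_all add: g_std_eq_0)
  qed
  then show ?thesis
    by (simp add: integral_std_gamma c2_def set_lebesgue_integral_def)
qed

lemma integral_max_ln_eq_c2: "(\<integral>p. max (ln (fst p)) (ln (snd p)) \<partial>MM) = c2 a"
proof -
  interpret pair_prob_space "std_gamma a" "std_gamma a" by (rule pair_prob_space_MM)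
  define f1 where "f1 p = (if snd p \<le> fst p then ln (fst p) else 0)" for p :: "real \<times> real"
  define f2 where "f2 x y = (if x < y then ln y else 0)" for x y :: real
  have [measurable]: "f1 \<in> borel_measurable MM" "case_prod f2 \<in> borel_measurable MM"
    unfolding f1_def f2_def by measurable
  have int1: "integrable MM f1"
  proof (rule Bochner_Integration.integrable_bound)
    show "integrable MM (\<lambda>p. \<bar>ln (fst p)\<bar>)" using ln_proj_moments(1)[of fst] by simp
    show "AE p in MM. norm (f1 p) \<le> norm \<bar>ln (fst p)\<bar>" by (intro AE_I2) (simp add: f1_def)
  qed measurable
  have int2: "integrable MM (case_prod f2)"
  proof (rule Bochner_Integration.integrable_bound)
    show "integrable MM (\<lambda>p. \<bar>ln (snd p)\<bar>)" using ln_proj_moments(1)[of snd] by simp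
    show "AE p in MM. norm (case_prod f2 p) \<le> norm \<bar>ln (snd p)\<bar>"
      by (intro AE_I2) (simp add: f2_def case_prod_beta)
  qed measurable
  have "(\<integral>p. f1 p \<partial>MM) = (\<integral>x. ln x * G_std a x \<partial>std_gamma a)"
    unfolding integral_fst'[OF int1, symmetric]
  proof (intro Bochner_Integration.integral_cong refl)
    fix x :: real
    have "(\<lambda>y. f1 (x, y)) = (\<lambda>y. ln x * indicator {..x} y)"
      by (auto simp: f1_def indicator_def)
    then show "(\<integral>y. f1 (x, y) \<partial>std_gamma a) = ln x * G_std a x"
      by (simp add: G_std_eq_measure)
  qed
  moreover have "(\<integral>p. case_prod f2 p \<partial>MM) = (\<integral>x. ln x * G_std a x \<partial>std_gamma a)"
    unfolding integral_snd[OF int2, symmetric]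
  proof (intro Bochner_Integration.integral_cong refl)
    fix y :: real
    have "(\<lambda>x. f2 x y) = (\<lambda>x. ln y * indicator {..<y} x)"
      by (auto simp: f2_def indicator_def)
    then show "(\<integral>x. f2 x y \<partial>std_gamma a) = ln y * G_std a y"
      by (simp add: G_std_eq_measure_lessThan)
  qed
  moreover have "(\<integral>p. max (ln (fst p)) (ln (snd p)) \<partial>MM) = (\<integral>p. f1 p + case_prod f2 p \<partial>MM)"
  proof (rule integral_cong_AE)
    show "AE p in MM. max (ln (fst p)) (ln (snd p)) = f1 p + case_prod f2 p"
      using AE_MM_pos
    proof eventually_elim
      case (elim p)
      then show ?case
        by (cases "snd p \<le> fst p") (simp_all add: f1_def f2_def case_prod_beta)
    qed
  qed measurable
  ultimately show ?thesis using int1 int2 integral_ln_mult_G_std by simp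
qed

lemma integral_ln_sum_MM: "(\<integral>p. ln (fst p + snd p) \<partial>MM) = Digamma (2 * a)"
  and integrable_ln_sum_MM: "integrable MM (\<lambda>p. ln (fst p + snd p))"
proof -
  interpret double: gamma_shape "2 * a" using shape_pos by unfold_locales simp
  have sum: "distr MM borel (\<lambda>p. fst p + snd p) = std_gamma (2 * a)"
    using distr_sum_std_gamma[OF shape_pos shape_pos] by (simp only: mult_2)
  have [measurable]: "(\<lambda>p. fst p + snd p) \<in> MM \<rightarrow>\<^sub>M borel" by measurable
  show "integrable MM (\<lambda>p. ln (fst p + snd p))"
    using integrable_distr_eq[of "\<lambda>p. fst p + snd p" MM borel ln] double.integrable_ln_std_gamma
    unfolding sum by simp
  show "(\<integral>p. ln (fst p + snd p) \<partial>MM) = Digamma (2 * a)"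
    using integral_distr[of "\<lambda>p. fst p + snd p" MM borel ln] double.integral_ln_std_gamma
    unfolding sum by simp
qed

lemma c2_bounds: "Digamma a < c2 a" "c2 a < Digamma (2 * a)"
proof -
  show "Digamma a < c2 a"
    using Digamma_less_mean_ln_at_max[of 1 1] by (simp add: mean_ln_at_max_1_1 integral_max_ln_eq_c2)
  let ?f = "\<lambda>p. ln (fst p + snd p) - max (ln (fst p)) (ln (snd p))"
  have "(\<integral>p. ?f p \<partial>MM) > 0"
  proof (rule integral_pos_of_pos_on[where S = "{0<..<1} \<times> {0<..<1}"])
    show "integrable MM ?f" using integrable_ln_sum_MM integrable_max_ln by simp
    show "AE p in MM. ?f p \<ge> 0" using AE_MM_pos by eventually_elim (auto simp: max_def)
    show "emeasure MM ({0<..<1} \<times> {0<..<1}) > 0" by (intro emeasure_MM_box_pos) simp_all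
    fix p :: "real \<times> real" assume "p \<in> {0<..<1} \<times> {0<..<1}"
    then have "0 < fst p" "0 < snd p" by auto
    then show "?f p > 0" by (simp add: max_def)
  qed simp
  then show "c2 a < Digamma (2 * a)"
    using integrable_ln_sum_MM integrable_max_ln
    by (simp add: integral_ln_sum_MM integral_max_ln_eq_c2)
qed

end

section \<open>Admissibility within \<open>K\<^sub>1\<close>\<close>

lemma Digamma_inv_Digamma:
  assumes "x > 0"
  shows "Digamma_inv (Digamma x) = x"
  unfolding Digamma_inv_def
proof (rule the_equality)
  fix y assume "y > 0 \<and> Digamma y = Digamma x"
  then show "y = x"
    using Digamma_real_strict_mono[of x y] Digamma_real_strict_mono[of y x] assms
    by (cases x y rule: linorder_cases) auto
qed (use assms in simp)

lemma inadmissible_if_dominated_by_delta: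
  assumes "dominates \<alpha> (delta c) d"
  shows "inadmissible \<alpha> d"
proof -
  have "(\<lambda>p. delta c (fst p) (snd p)) \<in> borel_measurable (lborel \<Otimes>\<^sub>M lborel)"
    unfolding delta_def by measurable
  with assms show ?thesis unfolding inadmissible_def by blast
qed

context gamma_shape
begin

lemma beta0_bounds: "0 < beta0 a" "beta0 a < a" "Digamma (a + beta0 a) = c2 a"
proof -
  have "continuous_on {a..2 * a} Digamma"
    using shape_pos by (intro continuous_on_Polygamma) (auto dest: nonpos_Ints_nonpos)
  then obtain x where x: "a \<le> x" "x \<le> 2 * a" "Digamma x = c2 a"
    using IVT'[of Digamma a "c2 a" "2 * a"] c2_bounds shape_pos by auto
  with c2_bounds have "a < x" "x < 2 * a" by (auto simp: order.order_iff_strict)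
  moreover have "beta0 a = x - a"
    using x shape_pos by (simp add: beta0_def Digamma_inv_Digamma flip: x(3))
  ultimately show "0 < beta0 a" "beta0 a < a" "Digamma (a + beta0 a) = c2 a"
    using x by simp_all
qed

lemma dominates_deltaI:
  assumes "\<And>\<theta>1 \<theta>2. \<theta>1 > 0 \<Longrightarrow> \<theta>2 > 0 \<Longrightarrow> (u - v) * (u + v - 2 * mean_ln_at_max \<theta>1 \<theta>2) < 0"
  shows "dominates a (delta u) (delta v)"
  unfolding dominates_def
  using assms by (auto simp: risk_delta_le_iff risk_delta_less_iff less_imp_le intro!: exI[of _ 1])

lemma dominates_delta_Digamma:
  assumes "c < Digamma a"
  shows "dominates a (delta (Digamma a)) (delta c)"
proof (rule dominates_deltaI)
  fix \<theta>1 \<theta>2 :: real assume "\<theta>1 > 0" "\<theta>2 > 0"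
  then have "Digamma a < mean_ln_at_max \<theta>1 \<theta>2" by (rule Digamma_less_mean_ln_at_max)
  then show "(Digamma a - c) * (Digamma a + c - 2 * mean_ln_at_max \<theta>1 \<theta>2) < 0"
    using assms by (intro mult_pos_neg) auto
qed

lemma dominates_delta_c2:
  assumes "c2 a < c"
  shows "dominates a (delta (c2 a)) (delta c)"
proof (rule dominates_deltaI)
  fix \<theta>1 \<theta>2 :: real
  have "mean_ln_at_max \<theta>1 \<theta>2 \<le> c2 a"
    using mean_ln_at_max_le by (simp add: integral_max_ln_eq_c2)
  then show "(c2 a - c) * (c2 a + c - 2 * mean_ln_at_max \<theta>1 \<theta>2) < 0"
    using assms by (intro mult_neg_pos) auto
qed

lemma admissible_K1_delta:
  assumes "Digamma a \<le> c" "c \<le> c2 a"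
  shows "admissible_K1 a (delta c)"
  unfolding admissible_K1_def
proof
  assume "\<exists>c'. dominates a (delta c') (delta c)"
  then obtain c' where dom: "dominates a (delta c') (delta c)" by blast
  then have le: "(c' - c) * (c' + c - 2 * mean_ln_at_max \<theta>1 \<theta>2) \<le> 0"
    if "\<theta>1 > 0" "\<theta>2 > 0" for \<theta>1 \<theta>2
    using that by (auto simp: dominates_def risk_delta_le_iff)
  from dom have "c' \<noteq> c" by (auto simp: dominates_def risk_delta_less_iff)
  then consider "c' < c" | "c < c'" by linarith
  then show False
  proof cases
    case 1
    have "(c' - c) * (c' + c - 2 * mean_ln_at_max 1 1) > 0"
      using 1 assms by (intro mult_neg_neg) (auto simp: mean_ln_at_max_1_1 integral_max_ln_eq_c2)
    with le[of 1 1] show False by simp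
  next
    case 2
    have "Digamma a < (c + c') / 2" using 2 assms by simp
    then have "eventually (\<lambda>n. mean_ln_at_max 1 (inverse (Suc n)) < (c + c') / 2) sequentially"
      by (rule order_tendstoD(2)[OF mean_ln_at_max_tendsto])
    then obtain n where n: "mean_ln_at_max 1 (inverse (Suc n)) < (c + c') / 2"
      unfolding eventually_sequentially by blast
    have "(c' - c) * (c' + c - 2 * mean_ln_at_max 1 (inverse (Suc n))) > 0"
      using 2 n by (intro mult_pos_pos) auto
    with le[of 1 "inverse (Suc n)"] show False by simp
  qed
qed

end

theorem corollary2p2:
  fixes \<alpha> :: real
  assumes "\<alpha> > 0"
  shows "0 < beta0 \<alpha> \<and> beta0 \<alpha> < \<alpha>
    \<and> (\<forall>\<beta>. 0 \<le> \<beta> \<and> \<beta> \<le> beta0 \<alpha> \<longrightarrow> admissible_K1 \<alpha> (delta (Digamma (\<alpha> + \<beta>))))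
    \<and> (\<forall>\<beta>. (- \<alpha> < \<beta> \<and> \<beta> < 0) \<or> beta0 \<alpha> < \<beta> \<longrightarrow> inadmissible \<alpha> (delta (Digamma (\<alpha> + \<beta>))))
    \<and> (\<forall>\<beta>. - \<alpha> < \<beta> \<and> \<beta> < 0 \<longrightarrow> dominates \<alpha> (delta (Digamma \<alpha>)) (delta (Digamma (\<alpha> + \<beta>))))
    \<and> (\<forall>\<beta>. beta0 \<alpha> < \<beta> \<longrightarrow> dominates \<alpha> (delta (c2 \<alpha>)) (delta (Digamma (\<alpha> + \<beta>))))"
proof -
  interpret gamma_shape \<alpha> using assms by unfold_locales
  note \<beta>0 = beta0_bounds
  have dom_Digamma: "dominates \<alpha> (delta (Digamma \<alpha>)) (delta (Digamma (\<alpha> + \<beta>)))"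
    if "- \<alpha> < \<beta>" "\<beta> < 0" for \<beta>
    using that by (intro dominates_delta_Digamma Digamma_real_strict_mono) auto
  have dom_c2: "dominates \<alpha> (delta (c2 \<alpha>)) (delta (Digamma (\<alpha> + \<beta>)))"
    if "beta0 \<alpha> < \<beta>" for \<beta>
    using that \<beta>0 assms Digamma_real_strict_mono[of "\<alpha> + beta0 \<alpha>" "\<alpha> + \<beta>"]
    by (intro dominates_delta_c2) auto
  have adm: "admissible_K1 \<alpha> (delta (Digamma (\<alpha> + \<beta>)))"
    if "0 \<le> \<beta>" "\<beta> \<le> beta0 \<alpha>" for \<beta>
    using that \<beta>0 assms Digamma_real_mono[of \<alpha> "\<alpha> + \<beta>"] Digamma_real_mono[of "\<alpha> + \<beta>" "\<alpha> + beta0 \<alpha>"]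
    by (intro admissible_K1_delta) auto
  show ?thesis
    using \<beta>0 dom_Digamma dom_c2 adm inadmissible_if_dominated_by_delta by blast
qed

end
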